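(* Let $m,n$ be positive integers and $\Lambda=(a_1,\dots,a_n|b_1,\dots,b_m)\in\mathbb Z^{n|m}$ be such that $a_1,\dots,a_n$ form a complete set of representatives modulo $n$ and $b_1,\dots,b_m$ form a complete set of representatives modulo $m$. Then every element of the orbit of $\Lambda$ under the Weyl groupoid action has the same property.
   Context: Elements of $\mathbb Z^{n|m}$ are identified with $\sum_ia_i\epsilon_i-\sum_jb_j\delta_j$. The Weyl groupoid action on $\mathbb Z^{n|m}$ is generated by the permutations of $a_1,\dots,a_n$ among themselves and of $b_1,\dots,b_m$ among themselves, and, for $\alpha=\epsilon_i-\delta_j$, by the bijections $\tau_\alpha:\Pi_\alpha\to\Pi_{-\alpha}$, $\Lambda\mapsto\Lambda+n\epsilon_i-m\delta_j$ (add $n$ to $a_i$, $m$ to $b_j$) and $\tau_{-\alpha}=\tau_\alpha^{-1}$, where $\Pi_\alpha=\{a_i=b_j\}$ and $\Pi_{-\alpha}=\{a_i-b_j=n-m\}$. The orbit of $\Lambda$ is the set of elements reachable from $\Lambda$ by finite sequences of these operations, each applied on its domain. *)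

theory Defs
  imports Main
begin

text \<open>An element \<open>(a_1,...,a_n | b_1,...,b_m)\<close> of Z^{n|m} is represented by a pair
  of integer lists \<open>(a, b)\<close> with \<open>length a = n\<close>, \<open>length b = m\<close> (0-based indices).\<close>

type_synonym wt = "int list \<times> int list"

definition swap_list :: "nat \<Rightarrow> nat \<Rightarrow> 'a list \<Rightarrow> 'a list" where
  "swap_list i k xs = xs[i := xs ! k, k := xs ! i]"

inductive weyl_step :: "nat \<Rightarrow> nat \<Rightarrow> wt \<Rightarrow> wt \<Rightarrow> bool" for n m where
  perm_a: "i < n \<Longrightarrow> k < n \<Longrightarrow> weyl_step n m (a, b) (swap_list i k a, b)"
| perm_b: "j < m \<Longrightarrow> l < m \<Longrightarrow> weyl_step n m (a, b) (a, swap_list j l b)"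
| tau_pos: "i < n \<Longrightarrow> j < m \<Longrightarrow> a ! i = b ! j \<Longrightarrow>
     weyl_step n m (a, b) (a[i := a ! i + int n], b[j := b ! j + int m])"
| tau_neg: "i < n \<Longrightarrow> j < m \<Longrightarrow> a ! i - b ! j = int n - int m \<Longrightarrow>
     weyl_step n m (a, b) (a[i := a ! i - int n], b[j := b ! j - int m])"

definition weyl_orbit :: "nat \<Rightarrow> nat \<Rightarrow> wt \<Rightarrow> wt set" where
  "weyl_orbit n m \<Lambda> = {\<Lambda>'. (weyl_step n m)\<^sup>*\<^sup>* \<Lambda> \<Lambda>'}"

definition complete_residues :: "nat \<Rightarrow> int list \<Rightarrow> bool" where
  "complete_residues k xs \<longleftrightarrow> length xs = k \<and>
     bij_betw (\<lambda>i. xs ! i mod int k) {0..<k} {0..<int k}"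

end

theory Submission
  imports Defs "HOL-Combinatorics.Transposition"
begin

text \<open>The Weyl groupoid only permutes the entries within each block and shifts an \<open>a\<close>-entry by
  \<open>\<plusminus>n\<close> and a \<open>b\<close>-entry by \<open>\<plusminus>m\<close>. Neither operation changes the multiset of residues of the
  \<open>a\<close>'s modulo \<open>n\<close> or of the \<open>b\<close>'s modulo \<open>m\<close>, so being a complete residue system is invariant
  along every path in the orbit.\<close>

lemma complete_residues_length: "complete_residues k xs \<Longrightarrow> length xs = k"
  by (simp add: complete_residues_def)

lemma complete_residues_reindex:
  assumes "complete_residues k xs" and "length ys = k"
    and "bij_betw \<sigma> {0..<k} {0..<k}"
    and "\<And>p. p < k \<Longrightarrow> ys ! p mod int k = xs ! \<sigma> p mod int k"
  shows "complete_residues k ys"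
proof -
  have "bij_betw ((\<lambda>p. xs ! p mod int k) \<circ> \<sigma>) {0..<k} {0..<int k}"
    using assms(1,3) by (auto simp: complete_residues_def intro: bij_betw_trans)
  moreover have "bij_betw ((\<lambda>p. xs ! p mod int k) \<circ> \<sigma>) {0..<k} {0..<int k} \<longleftrightarrow>
      bij_betw (\<lambda>p. ys ! p mod int k) {0..<k} {0..<int k}"
    using assms(4) by (intro bij_betw_cong) simp
  ultimately show ?thesis
    using assms(2) by (simp add: complete_residues_def)
qed

lemma complete_residues_list_update:
  assumes "complete_residues k xs" and "y mod int k = xs ! i mod int k"
  shows "complete_residues k (xs[i := y])"
proof (rule complete_residues_reindex[where \<sigma> = id, OF assms(1)])
  have length: "length xs = k"
    using assms(1) by (rule complete_residues_length)
  then show "length (xs[i := y]) = k"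
    by simp
  show "xs[i := y] ! p mod int k = xs ! id p mod int k" if "p < k" for p
    using assms(2) length that by (cases "p = i") auto
qed simp

lemma complete_residues_swap_list:
  assumes "complete_residues k xs" and "i < k" and "j < k"
  shows "complete_residues k (swap_list i j xs)"
  using assms(2,3) complete_residues_length[OF assms(1)]
  by (intro complete_residues_reindex[where \<sigma> = "transpose i j", OF assms(1)])
    (auto simp: swap_list_def nth_list_update transpose_def)

lemma weyl_step_complete_residues:
  assumes "weyl_step n m (a, b) (a', b')"
    and "complete_residues n a" and "complete_residues m b"
  shows "complete_residues n a' \<and> complete_residues m b'"
  using assms(1)
proof cases
  case perm_a
  then show ?thesis using assms(2,3) complete_residues_swap_list by simp
next
  case perm_b
  then show ?thesis using assms(2,3) complete_residues_swap_list by simp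
next
  case tau_pos
  then show ?thesis using assms(2,3) complete_residues_list_update by simp
next
  case tau_neg
  then show ?thesis using assms(2,3) complete_residues_list_update by simp
qed

lemma weyl_orbit_complete_residues:
  assumes "complete_residues n a" and "complete_residues m b"
    and "(a', b') \<in> weyl_orbit n m (a, b)"
  shows "complete_residues n a' \<and> complete_residues m b'"
proof -
  have "(weyl_step n m)\<^sup>*\<^sup>* (a, b) (a', b')"
    using assms(3) by (simp add: weyl_orbit_def)
  then show ?thesis
  proof (induction rule: rtranclp_induct2)
    case refl
    then show ?case using assms(1,2) by simp
  next
    case step
    then show ?case using weyl_step_complete_residues by blast
  qed
qed

theorem lemma4p1:
  fixes n m :: nat and a b :: "int list"
  assumes "0 < n" and "0 < m"
    and "complete_residues n a" and "complete_residues m b"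
    and "(a', b') \<in> weyl_orbit n m (a, b)"
  shows "complete_residues n a' \<and> complete_residues m b'"
  using assms(3-5) by (rule weyl_orbit_complete_residues)

end
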